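(* Let $G=(V,E)$ be a finite simple graph with no isolated vertices and no isolated edges, whose vertices operate independently, vertex $v$ with probability $p_v$, and let $q_v=1-p_v$, $\mathbf{p}=(p_v)_{v\in V}$. Let $A$ be any set of vertices of $G$ each of which is adjacent to a vertex of degree $1$. Then \[ \operatorname{DRel}(G,\mathbf{p})=\sum_{J\subseteq V\setminus A}(-1)^{|J|}\prod_{v\in N_G[J]}q_v. \]
   Context: $\operatorname{DRel}(G,\mathbf{p})$ is the probability that the set of operating vertices is a dominating set of $G$ (every vertex not in the set is adjacent to a vertex in it); edges never fail. $N_G[J]$ is the closed neighbourhood of $J$ (vertices in $J$ or adjacent to a vertex of $J$). An isolated edge is an edge both of whose endpoints have degree $1$. *)

theory Defs
  imports Complex_Main
begin

definition simple_graph :: "'a set \<Rightarrow> ('a \<Rightarrow> 'a \<Rightarrow> bool) \<Rightarrow> bool" where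
  "simple_graph V E \<longleftrightarrow> finite V \<and> (\<forall>u v. E u v \<longrightarrow> u \<in> V \<and> v \<in> V)
     \<and> (\<forall>u v. E u v \<longrightarrow> E v u) \<and> (\<forall>v. \<not> E v v)"

definition degree :: "'a set \<Rightarrow> ('a \<Rightarrow> 'a \<Rightarrow> bool) \<Rightarrow> 'a \<Rightarrow> nat" where
  "degree V E v = card {u \<in> V. E v u}"

definition no_isolated_vertices :: "'a set \<Rightarrow> ('a \<Rightarrow> 'a \<Rightarrow> bool) \<Rightarrow> bool" where
  "no_isolated_vertices V E \<longleftrightarrow> (\<forall>v\<in>V. degree V E v \<noteq> 0)"

definition no_isolated_edges :: "'a set \<Rightarrow> ('a \<Rightarrow> 'a \<Rightarrow> bool) \<Rightarrow> bool" where
  "no_isolated_edges V E \<longleftrightarrow>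
     (\<forall>u\<in>V. \<forall>v\<in>V. E u v \<longrightarrow> \<not> (degree V E u = 1 \<and> degree V E v = 1))"

definition dominating :: "'a set \<Rightarrow> ('a \<Rightarrow> 'a \<Rightarrow> bool) \<Rightarrow> 'a set \<Rightarrow> bool" where
  "dominating V E S \<longleftrightarrow> S \<subseteq> V \<and> (\<forall>v\<in>V. v \<notin> S \<longrightarrow> (\<exists>u\<in>S. E v u))"

definition closed_nbhd :: "'a set \<Rightarrow> ('a \<Rightarrow> 'a \<Rightarrow> bool) \<Rightarrow> 'a set \<Rightarrow> 'a set" where
  "closed_nbhd V E J = J \<union> {v \<in> V. \<exists>u\<in>J. E v u}"

text \<open>Domination reliability: probability that the set of operating vertices
  (vertex v operating independently with probability p v) is dominating.\<close>
definition DRel :: "'a set \<Rightarrow> ('a \<Rightarrow> 'a \<Rightarrow> bool) \<Rightarrow> ('a \<Rightarrow> real) \<Rightarrow> real" where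
  "DRel V E p = (\<Sum>S\<in>{S. S \<subseteq> V \<and> dominating V E S}.
      (\<Prod>v\<in>S. p v) * (\<Prod>v\<in>V - S. 1 - p v))"

end

theory Submission
  imports Defs
begin

text \<open>Inclusion-exclusion over the closed neighbourhoods expresses DRel as the alternating sum
  over all J \<subseteq> V. If N[w] \<subseteq> N[a] for some w \<noteq> a, then the terms indexed by J \<ni> a cancel in
  pairs J \<leftrightarrow> J \<triangle> {w}, so a may be dropped from the range of summation. A pendant vertex w
  attached to a satisfies N[w] = {w, a} \<subseteq> N[a], and since there are no isolated edges, w itself
  is not attached to a pendant vertex, so all of A can be dropped at once.\<close>

lemma prod_of_bool:
  "finite A \<Longrightarrow> (\<Prod>x\<in>A. of_bool (P x) :: 'b::comm_semiring_1) = of_bool (\<forall>x\<in>A. P x)"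
  by (induction A rule: finite_induct) auto

lemma sum_Pow_insert:
  fixes g :: "'a set \<Rightarrow> 'b::comm_monoid_add"
  assumes "finite W" "x \<notin> W"
  shows "(\<Sum>J\<in>Pow (insert x W). g J) = (\<Sum>J\<in>Pow W. g J) + (\<Sum>J\<in>Pow W. g (insert x J))"
proof -
  have "inj_on (insert x) (Pow W)"
    using assms(2) by (intro inj_onI) (metis PowD insert_ident subsetD)
  moreover have "(\<Sum>J\<in>Pow (insert x W). g J) = (\<Sum>J\<in>Pow W. g J) + (\<Sum>J\<in>insert x ` Pow W. g J)"
    unfolding Pow_insert using assms by (intro sum.union_disjoint) auto
  ultimately show ?thesis
    by (simp add: sum.reindex)
qed

lemma alternating_sum_Pow_remove:
  fixes g :: "'a set \<Rightarrow> 'b::comm_ring_1"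
  assumes fin: "finite W" and "a \<in> W" "w \<in> W" "w \<noteq> a"
    and absorb: "\<And>J. g (insert w (insert a J)) = g (insert a J)"
  shows "(\<Sum>J\<in>Pow W. (-1) ^ card J * g J) = (\<Sum>J\<in>Pow (W - {a}). (-1) ^ card J * g J)"
proof -
  define F where "F J = (-1) ^ card J * g J" for J
  define U where "U = W - {a, w}"
  have U: "finite U" "a \<notin> U" "w \<notin> U"
    using fin by (auto simp: U_def)
  have W: "W = insert a (insert w U)" and Wa: "W - {a} = insert w U"
    using assms(2-4) by (auto simp: U_def)
  have flip: "F (insert a (insert w J)) = - F (insert a J)" if "J \<in> Pow U" for J
  proof -
    have "finite J" "a \<notin> J" "w \<notin> J"
      using that U finite_subset by auto
    then have "card (insert a (insert w J)) = Suc (card (insert a J))"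
      using assms(4) by simp
    then show ?thesis
      unfolding F_def by (simp add: insert_commute[of a w] absorb)
  qed
  have "(\<Sum>J\<in>Pow (insert w U). F (insert a J)) = 0"
    using U by (simp add: sum_Pow_insert flip sum_negf)
  moreover have "(\<Sum>J\<in>Pow W. F J) = (\<Sum>J\<in>Pow (insert w U). F J) + (\<Sum>J\<in>Pow (insert w U). F (insert a J))"
    unfolding W using U assms(4) by (intro sum_Pow_insert) auto
  ultimately show ?thesis
    unfolding Wa by (simp add: F_def)
qed

lemma alternating_sum_Pow_remove_set:
  fixes g :: "'a set \<Rightarrow> 'b::comm_ring_1"
  assumes "finite W" "B \<subseteq> W"
    and dominated: "\<And>a. a \<in> B \<Longrightarrow> \<exists>w\<in>W - B. \<forall>J. g (insert w (insert a J)) = g (insert a J)"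
  shows "(\<Sum>J\<in>Pow W. (-1) ^ card J * g J) = (\<Sum>J\<in>Pow (W - B). (-1) ^ card J * g J)"
proof -
  have "finite B"
    using assms(1,2) finite_subset by blast
  then show ?thesis
    using assms(2) dominated
  proof (induction B rule: finite_induct)
    case (insert a B)
    obtain w where w: "w \<in> W - insert a B" "\<forall>J. g (insert w (insert a J)) = g (insert a J)"
      using insert.prems(2) by blast
    have "(\<Sum>J\<in>Pow W. (-1) ^ card J * g J) = (\<Sum>J\<in>Pow (W - B). (-1) ^ card J * g J)"
    proof (rule insert.IH)
      fix b assume "b \<in> B"
      then obtain v where "v \<in> W - insert a B" "\<forall>J. g (insert v (insert b J)) = g (insert b J)"
        using insert.prems(2) by blast
      then show "\<exists>v\<in>W - B. \<forall>J. g (insert v (insert b J)) = g (insert b J)"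
        by blast
    qed (use insert.prems in auto)
    also have "\<dots> = (\<Sum>J\<in>Pow (W - B - {a}). (-1) ^ card J * g J)"
      using insert.hyps(2) insert.prems(1) w assms(1)
      by (intro alternating_sum_Pow_remove[of "W - B" a w]) auto
    also have "W - B - {a} = W - insert a B"
      by blast
    finally show ?case .
  qed simp
qed

lemma closed_nbhd_insert_dominated:
  assumes "closed_nbhd V E {w} \<subseteq> closed_nbhd V E {a}"
  shows "closed_nbhd V E (insert w (insert a J)) = closed_nbhd V E (insert a J)"
  using assms unfolding closed_nbhd_def by blast

lemma closed_nbhd_subset: "J \<subseteq> V \<Longrightarrow> closed_nbhd V E J \<subseteq> V"
  unfolding closed_nbhd_def by auto

lemma closed_nbhd_Int_empty_iff:
  "S \<inter> closed_nbhd V E X = {} \<longleftrightarrow> (\<forall>v\<in>X. S \<inter> closed_nbhd V E {v} = {})"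
  unfolding closed_nbhd_def by auto

lemma dominating_iff_closed_nbhd:
  assumes "simple_graph V E" "S \<subseteq> V"
  shows "dominating V E S \<longleftrightarrow> (\<forall>v\<in>V. S \<inter> closed_nbhd V E {v} \<noteq> {})"
  using assms unfolding simple_graph_def dominating_def closed_nbhd_def by blast

lemma of_bool_dominating_eq_sum:
  assumes sg: "simple_graph V E" and "S \<subseteq> V"
  shows "of_bool (dominating V E S)
     = (\<Sum>X\<in>Pow V. (-1) ^ card X * of_bool (S \<inter> closed_nbhd V E X = {}) :: 'b::comm_ring_1)"
proof -
  have fin: "finite V"
    using sg by (simp add: simple_graph_def)
  have "of_bool (dominating V E S) = (\<Prod>v\<in>V. 1 - of_bool (S \<inter> closed_nbhd V E {v} = {}) :: 'b)"
    using fin by (simp add: dominating_iff_closed_nbhd[OF assms] prod_of_bool flip: of_bool_not_iff)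
  also have "\<dots> = (\<Sum>X\<in>Pow V. (-1) ^ card X * (\<Prod>v\<in>X. of_bool (S \<inter> closed_nbhd V E {v} = {})))"
    using prod_diff_conv_sum[OF fin, of "\<lambda>_. 1" "\<lambda>v. of_bool (S \<inter> closed_nbhd V E {v} = {}) :: 'b"] by simp
  also have "\<dots> = (\<Sum>X\<in>Pow V. (-1) ^ card X * of_bool (S \<inter> closed_nbhd V E X = {}))"
    using fin by (intro sum.cong refl)
      (auto simp: prod_of_bool rev_finite_subset simp flip: closed_nbhd_Int_empty_iff)
  finally show ?thesis .
qed

lemma sum_Pow_disjoint_prob:
  fixes p :: "'a \<Rightarrow> 'b::comm_ring_1"
  assumes fin: "finite V" and N: "N \<subseteq> V"
  shows "(\<Sum>S\<in>Pow V. (\<Prod>v\<in>S. p v) * (\<Prod>v\<in>V - S. 1 - p v) * of_bool (S \<inter> N = {}))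
      = (\<Prod>v\<in>N. 1 - p v)"
proof -
  have fN: "finite N"
    using fin N finite_subset by blast
  have split: "(\<Prod>v\<in>V - S. 1 - p v) = (\<Prod>v\<in>(V - N) - S. 1 - p v) * (\<Prod>v\<in>N. 1 - p v)"
    if "S \<in> Pow (V - N)" for S
  proof -
    have "(\<Prod>v\<in>V - S. 1 - p v) = (\<Prod>v\<in>((V - N) - S) \<union> N. 1 - p v)"
      using that N by (intro prod.cong) auto
    also have "\<dots> = (\<Prod>v\<in>(V - N) - S. 1 - p v) * (\<Prod>v\<in>N. 1 - p v)"
      using fin fN by (intro prod.union_disjoint) auto
    finally show ?thesis .
  qed
  have "Pow V \<inter> {S. S \<inter> N = {}} = Pow (V - N)"
    by auto
  then have "(\<Sum>S\<in>Pow V. (\<Prod>v\<in>S. p v) * (\<Prod>v\<in>V - S. 1 - p v) * of_bool (S \<inter> N = {}))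
      = (\<Sum>S\<in>Pow (V - N). (\<Prod>v\<in>S. p v) * (\<Prod>v\<in>V - S. 1 - p v))"
    using fin by (simp only: sum_mult_of_bool_eq finite_Pow_iff)
  also have "\<dots> = (\<Sum>S\<in>Pow (V - N). (\<Prod>v\<in>S. p v) * (\<Prod>v\<in>(V - N) - S. 1 - p v)) * (\<Prod>v\<in>N. 1 - p v)"
    unfolding sum_distrib_right by (intro sum.cong refl) (simp add: split mult.assoc)
  also have "(\<Sum>S\<in>Pow (V - N). (\<Prod>v\<in>S. p v) * (\<Prod>v\<in>(V - N) - S. 1 - p v)) = (\<Prod>v\<in>V - N. p v + (1 - p v))"
    using fin by (intro prod_add[symmetric]) simp
  finally show ?thesis
    by simp
qed

lemma DRel_eq_alternating_sum:
  assumes sg: "simple_graph V E"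
  shows "DRel V E p = (\<Sum>J\<in>Pow V. (-1) ^ card J * (\<Prod>v\<in>closed_nbhd V E J. 1 - p v))"
proof -
  have fin: "finite V"
    using sg by (simp add: simple_graph_def)
  define P where "P S = (\<Prod>v\<in>S. p v) * (\<Prod>v\<in>V - S. 1 - p v)" for S
  have "DRel V E p = (\<Sum>S\<in>Pow V. P S * of_bool (dominating V E S))"
  proof -
    have "{S. S \<subseteq> V \<and> dominating V E S} = Pow V \<inter> {S. dominating V E S}"
      by auto
    then show ?thesis
      unfolding DRel_def P_def using fin by (simp only: sum_mult_of_bool_eq finite_Pow_iff)
  qed
  also have "\<dots> = (\<Sum>S\<in>Pow V. \<Sum>X\<in>Pow V. (-1) ^ card X * (P S * of_bool (S \<inter> closed_nbhd V E X = {})))"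
    by (intro sum.cong refl) (auto simp: of_bool_dominating_eq_sum[OF sg] sum_distrib_left mult_ac)
  also have "\<dots> = (\<Sum>X\<in>Pow V. (-1) ^ card X * (\<Sum>S\<in>Pow V. P S * of_bool (S \<inter> closed_nbhd V E X = {})))"
    by (subst sum.swap) (simp add: sum_distrib_left)
  also have "\<dots> = (\<Sum>J\<in>Pow V. (-1) ^ card J * (\<Prod>v\<in>closed_nbhd V E J. 1 - p v))"
    by (intro sum.cong refl) (auto simp: P_def sum_Pow_disjoint_prob[OF fin closed_nbhd_subset])
  finally show ?thesis .
qed

lemma degree_one_neighbourhood:
  assumes "simple_graph V E" "E a w" "degree V E w = 1"
  shows "{u\<in>V. E w u} = {a}"
proof -
  obtain x where "{u\<in>V. E w u} = {x}"
    using assms(3) unfolding degree_def by (auto simp: card_Suc_eq)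
  moreover have "a \<in> {u\<in>V. E w u}"
    using assms(1,2) unfolding simple_graph_def by auto
  ultimately show ?thesis
    by auto
qed

lemma closed_nbhd_pendant_subset:
  assumes "simple_graph V E" "E a w" "degree V E w = 1"
  shows "closed_nbhd V E {w} \<subseteq> closed_nbhd V E {a}"
  using assms degree_one_neighbourhood[OF assms] unfolding simple_graph_def closed_nbhd_def by auto

lemma neighbour_of_pendant_degree_ne_one:
  assumes "simple_graph V E" "no_isolated_edges V E"
    and "E a w" "degree V E w = 1" "E w x"
  shows "degree V E x \<noteq> 1"
proof -
  have "a \<in> V" "w \<in> V" "x = a"
    using assms(1,3,5) degree_one_neighbourhood[OF assms(1,3,4)] unfolding simple_graph_def by auto
  then show ?thesis
    using assms(2-5) unfolding no_isolated_edges_def by blast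
qed

theorem corollary3:
  fixes V :: "'a set" and E :: "'a \<Rightarrow> 'a \<Rightarrow> bool" and p :: "'a \<Rightarrow> real" and A :: "'a set"
  assumes "simple_graph V E"
    and "no_isolated_vertices V E"
    and "no_isolated_edges V E"
    and "\<forall>v\<in>V. 0 \<le> p v \<and> p v \<le> 1"
    and "A \<subseteq> V"
    and "\<forall>a\<in>A. \<exists>w\<in>V. E a w \<and> degree V E w = 1"
  shows "DRel V E p = (\<Sum>J\<in>Pow (V - A). (-1) ^ card J * (\<Prod>v\<in>closed_nbhd V E J. 1 - p v))"
proof -
  have "\<exists>w\<in>V - A. \<forall>J. (\<Prod>v\<in>closed_nbhd V E (insert w (insert a J)). 1 - p v)
                         = (\<Prod>v\<in>closed_nbhd V E (insert a J). 1 - p v)" if "a \<in> A" for a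
  proof -
    obtain w where w: "w \<in> V" "E a w" "degree V E w = 1"
      using assms(6) \<open>a \<in> A\<close> by blast
    have "w \<notin> A"
      using assms(6) neighbour_of_pendant_degree_ne_one[OF assms(1,3) w(2,3)] by blast
    with w(1) show ?thesis
      using closed_nbhd_insert_dominated[OF closed_nbhd_pendant_subset[OF assms(1) w(2,3)]]
      by (intro bexI[of _ w] allI) simp_all
  qed
  then show ?thesis
    using assms(1,5) unfolding DRel_eq_alternating_sum[OF assms(1)]
    by (intro alternating_sum_Pow_remove_set) (auto simp: simple_graph_def)
qed

end
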